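(* Let $\mathbf{a}$ be a non-periodic CSCA and $j\in\{1,2,3\}$. Let $\xi\in\mathcal{P}^2$ be non-zero. Then there is at most one time $t\ge0$ such that $\mathbf{a}^t\xi$ is of "type $j$", where type $1$ means $\mathbf{a}^t\xi=(p,0)$, type $3$ means $\mathbf{a}^t\xi=(0,p)$, and type $2$ means $\mathbf{a}^t\xi=(p,p)$ for some non-zero $p\in\mathcal{P}$. Equivalently: in the history $T^t(W(\xi))$, $t\ge 0$, of a non-periodic CQCA $T$, a finite tensor product consisting only of $\sigma_j$'s and identities occurs at most once.
   Context: $\mathcal{P}$ = Laurent polynomials in $u$ over $\mathbb{Z}_2$, $\mathcal{R}$ its palindromes. A CSCA is a $2\times2$ matrix over $\mathcal{R}$ of determinant $1$; it is periodic if some positive power is the identity. A vector $\xi=(\xi_+,\xi_-)\in\mathcal{P}^2$ labels the Pauli product $W(\xi)=\bigotimes_xW(\xi_+(x),\xi_-(x))$ with $W(1,0)=\sigma_1$, $W(0,1)=\sigma_3$, $W(1,1)\propto\sigma_2$, $W(0,0)=\mathbb{1}$; a CQCA $T$ acts as $T(W(\xi))\propto W(\mathbf{a}\xi)$. *)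

theory Defs
  imports Main "HOL-Library.Z2"
begin

text \<open>Laurent polynomials in u over Z_2: coefficient functions int => bit with finite support.
  The function p represents sum_n (p n) u^n.\<close>

type_synonym lpoly = "int \<Rightarrow> bit"

definition is_lpoly :: "lpoly \<Rightarrow> bool" where
  "is_lpoly p \<longleftrightarrow> finite {n. p n \<noteq> 0}"

definition lp_zero :: lpoly where "lp_zero = (\<lambda>n. 0)"
definition lp_one :: lpoly where "lp_one = (\<lambda>n. if n = 0 then 1 else 0)"
definition lp_add :: "lpoly \<Rightarrow> lpoly \<Rightarrow> lpoly" where
  "lp_add p q = (\<lambda>n. p n + q n)"
definition lp_mult :: "lpoly \<Rightarrow> lpoly \<Rightarrow> lpoly" where
  "lp_mult p q = (\<lambda>n. \<Sum>k\<in>{k. p k \<noteq> 0}. p k * q (n - k))"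

text \<open>Palindromes: p(u) = p(u^{-1}).\<close>
definition is_palindrome :: "lpoly \<Rightarrow> bool" where
  "is_palindrome p \<longleftrightarrow> is_lpoly p \<and> (\<forall>n. p (- n) = p n)"

text \<open>2x2 matrices (a11, a12, a21, a22) and vectors (xi_+, xi_-).\<close>
type_synonym lmat = "lpoly \<times> lpoly \<times> lpoly \<times> lpoly"
type_synonym lvec = "lpoly \<times> lpoly"

definition mat_id :: lmat where "mat_id = (lp_one, lp_zero, lp_zero, lp_one)"

fun mat_mult :: "lmat \<Rightarrow> lmat \<Rightarrow> lmat" where
  "mat_mult (a11, a12, a21, a22) (b11, b12, b21, b22) =
     (lp_add (lp_mult a11 b11) (lp_mult a12 b21), lp_add (lp_mult a11 b12) (lp_mult a12 b22),
      lp_add (lp_mult a21 b11) (lp_mult a22 b21), lp_add (lp_mult a21 b12) (lp_mult a22 b22))"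

fun mat_pow :: "lmat \<Rightarrow> nat \<Rightarrow> lmat" where
  "mat_pow a 0 = mat_id"
| "mat_pow a (Suc n) = mat_mult a (mat_pow a n)"

fun mat_apply :: "lmat \<Rightarrow> lvec \<Rightarrow> lvec" where
  "mat_apply (a11, a12, a21, a22) (x, y) =
     (lp_add (lp_mult a11 x) (lp_mult a12 y), lp_add (lp_mult a21 x) (lp_mult a22 y))"

fun mat_det :: "lmat \<Rightarrow> lpoly" where
  "mat_det (a11, a12, a21, a22) = lp_add (lp_mult a11 a22) (lp_mult a12 a21)"
  \<comment> \<open>over Z_2, minus equals plus\<close>

definition is_csca :: "lmat \<Rightarrow> bool" where
  "is_csca a \<longleftrightarrow> (case a of (a11, a12, a21, a22) \<Rightarrow>
      is_palindrome a11 \<and> is_palindrome a12 \<and> is_palindrome a21 \<and> is_palindrome a22)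
    \<and> mat_det a = lp_one"

definition is_periodic :: "lmat \<Rightarrow> bool" where
  "is_periodic a \<longleftrightarrow> (\<exists>n>0. mat_pow a n = mat_id)"

definition is_type :: "nat \<Rightarrow> lvec \<Rightarrow> bool" where
  "is_type j v \<longleftrightarrow> (\<exists>p. is_lpoly p \<and> p \<noteq> lp_zero \<and>
      ((j = 1 \<and> v = (p, lp_zero)) \<or> (j = 2 \<and> v = (p, p)) \<or> (j = 3 \<and> v = (lp_zero, p))))"

end

(*
  Suppose a^s with s > 0 maps a vector of type j to a vector of type j, and write b = a^s.
  In all three cases det b factors as a product of two palindromes built from the entries of b
  (b11 b22 for types 1 and 3, and L (L + b11 + b22) with L = b11 + b12 = b21 + b22 for type 2).
  The only palindromic units of Z_2[u, 1/u] are 1, since a unit is a monomial; hence both factors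
  equal 1 and the trace b11 + b22 vanishes. In characteristic 2, Cayley-Hamilton then gives
  b^2 = tr(b) b + det(b) = 1, so a^(2s) = 1 and a is periodic.

  The ring computations are done in the Laurent series ring over Z_2, into which finitely
  supported coefficient functions embed homomorphically.
*)

theory Submission
  imports Defs "HOL-Computational_Algebra.Formal_Laurent_Series"
begin

unbundle fps_syntax

type_synonym 'a mat2 = "'a \<times> 'a \<times> 'a \<times> 'a"

fun mat2_all :: "('a \<Rightarrow> bool) \<Rightarrow> 'a mat2 \<Rightarrow> bool" where
  "mat2_all P (a, b, c, d) \<longleftrightarrow> P a \<and> P b \<and> P c \<and> P d"

fun mat2_map :: "('a \<Rightarrow> 'b) \<Rightarrow> 'a mat2 \<Rightarrow> 'b mat2" where
  "mat2_map f (a, b, c, d) = (f a, f b, f c, f d)"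

definition mat2_one :: "'a::comm_ring_1 mat2" where
  "mat2_one = (1, 0, 0, 1)"

fun mat2_mult :: "'a::comm_ring_1 mat2 \<Rightarrow> 'a mat2 \<Rightarrow> 'a mat2" where
  "mat2_mult (a, b, c, d) (a', b', c', d') =
     (a * a' + b * c', a * b' + b * d', c * a' + d * c', c * b' + d * d')"

fun mat2_pow :: "'a::comm_ring_1 mat2 \<Rightarrow> nat \<Rightarrow> 'a mat2" where
  "mat2_pow M 0 = mat2_one"
| "mat2_pow M (Suc n) = mat2_mult M (mat2_pow M n)"

fun mat2_apply :: "'a::comm_ring_1 mat2 \<Rightarrow> 'a \<times> 'a \<Rightarrow> 'a \<times> 'a" where
  "mat2_apply (a, b, c, d) (x, y) = (a * x + b * y, c * x + d * y)"

fun mat2_det :: "'a::comm_ring_1 mat2 \<Rightarrow> 'a" where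
  "mat2_det (a, b, c, d) = a * d - b * c"

lemma mat2_mult_assoc: "mat2_mult (mat2_mult L M) N = mat2_mult L (mat2_mult M N)"
  by (cases L; cases M; cases N) (simp add: algebra_simps)

lemma mat2_mult_one_left [simp]: "mat2_mult mat2_one M = M"
  by (cases M) (simp add: mat2_one_def)

lemma mat2_pow_add: "mat2_pow M (m + n) = mat2_mult (mat2_pow M m) (mat2_pow M n)"
  by (induction m) (simp_all add: mat2_mult_assoc)

lemma mat2_apply_mult: "mat2_apply (mat2_mult M N) v = mat2_apply M (mat2_apply N v)"
  by (cases M; cases N; cases v) (simp add: algebra_simps)

lemma mat2_det_mult: "mat2_det (mat2_mult M N) = mat2_det M * mat2_det N"
  by (cases M; cases N) (simp add: algebra_simps)

lemma mat2_det_pow: "mat2_det (mat2_pow M n) = mat2_det M ^ n"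
  by (induction n) (simp_all add: mat2_one_def mat2_det_mult)

lemma mat2_square_traceless:
  assumes "a + d = 0"
  shows "mat2_mult (a, b, c, d) (a, b, c, d)
           = (- mat2_det (a, b, c, d), 0, 0, - mat2_det (a, b, c, d))"
proof -
  have "d = - a" using assms by (simp add: add_eq_0_iff)
  then show ?thesis by (simp add: algebra_simps)
qed

lemma bit_fls_uminus [simp]: "- (f :: bit fls) = f"
  by (rule fls_eqI) simp

lemma bit_fls_add_self [simp]: "(f :: bit fls) + f = 0"
  by (metis bit_fls_uminus add.right_inverse)

lemma bit_fls_add_cancel_left [simp]: "(f :: bit fls) + (f + g) = g"
  by (simp flip: add.assoc)

lemma bit_fls_diff_eq_add: "(f :: bit fls) - g = f + g"
  by (metis bit_fls_uminus diff_conv_add_uminus)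

definition fls_palindromic :: "'a::zero fls \<Rightarrow> bool" where
  "fls_palindromic f \<longleftrightarrow> (\<forall>n. f $$ (- n) = f $$ n)"

lemma fls_palindromic_add:
  "fls_palindromic f \<Longrightarrow> fls_palindromic g \<Longrightarrow> fls_palindromic (f + g)"
  by (simp add: fls_palindromic_def)

lemma fls_palindromic_subdegree_nonpos:
  assumes "fls_palindromic f" "f \<noteq> 0"
  shows "fls_subdegree f \<le> 0"
proof -
  have "f $$ (- fls_subdegree f) \<noteq> 0"
    using assms by (simp add: fls_palindromic_def)
  then have "fls_subdegree f \<le> - fls_subdegree f" by (rule fls_subdegree_leI)
  then show ?thesis by simp
qed

text \<open>Both factors have subdegree \<open>\<le> 0\<close> and the subdegrees add up to \<open>0\<close>, so they vanish; by
  symmetry no positive exponent occurs either.\<close>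

lemma fls_palindromic_unit_const:
  fixes f g :: "'a::idom fls"
  assumes "fls_palindromic f" "fls_palindromic g" "f * g = 1"
  shows "f = fls_const (f $$ 0)"
proof (rule fls_eqI)
  fix n
  have "f \<noteq> 0" "g \<noteq> 0" using assms(3) by auto
  then have "fls_subdegree f + fls_subdegree g = 0"
    using assms(3) fls_subdegree_mult by fastforce
  moreover have "fls_subdegree f \<le> 0" "fls_subdegree g \<le> 0"
    using assms(1,2) \<open>f \<noteq> 0\<close> \<open>g \<noteq> 0\<close> fls_palindromic_subdegree_nonpos by auto
  ultimately have deg: "fls_subdegree f = 0" by linarith
  have "f $$ n = 0" if "n \<noteq> 0"
  proof (cases "n < 0")
    case True
    then show ?thesis using deg by simp
  next
    case False
    with that have "f $$ (- n) = 0" using deg by simp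
    then show ?thesis using assms(1) by (simp add: fls_palindromic_def)
  qed
  then show "f $$ n = fls_const (f $$ 0) $$ n" by simp
qed

lemma bit_fls_palindromic_unit_eq_one:
  fixes f g :: "bit fls"
  assumes "fls_palindromic f" "fls_palindromic g" "f * g = 1"
  shows "f = 1"
proof -
  have "f \<noteq> 0" using assms(3) by auto
  with fls_palindromic_unit_const[OF assms] have "f $$ 0 = 1"
    by (metis bit_not_zero_iff fls_const_0)
  with fls_palindromic_unit_const[OF assms] show ?thesis by simp
qed

lemma bit_fls_palindromic_unit_sum:
  fixes f g :: "bit fls"
  assumes "fls_palindromic f" "fls_palindromic g" "f * g = 1"
  shows "f + g = 0"
proof -
  have "g * f = 1" using assms(3) by (simp add: mult.commute)
  then show ?thesis
    using assms bit_fls_palindromic_unit_eq_one by (metis bit_fls_add_self)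
qed

definition sigma_type :: "nat \<Rightarrow> 'a::zero \<times> 'a \<Rightarrow> bool" where
  "sigma_type j v \<longleftrightarrow> (\<exists>p. p \<noteq> 0 \<and>
      ((j = 1 \<and> v = (p, 0)) \<or> (j = 2 \<and> v = (p, p)) \<or> (j = 3 \<and> v = (0, p))))"

text \<open>In each of the three cases the determinant factors as a product of two palindromes,
  namely \<open>a d\<close> for types 1 and 3 and \<open>L (L + a + d)\<close> with \<open>L = a + b = c + d\<close> for type 2;
  both factors are then \<open>1\<close>, which forces \<open>a + d = 0\<close>.\<close>

lemma sigma_type_preserved_traceless:
  fixes a b c d :: "bit fls"
  assumes pal: "mat2_all fls_palindromic (a, b, c, d)"
    and det: "mat2_det (a, b, c, d) = 1"
    and v: "sigma_type j v" and w: "sigma_type j (mat2_apply (a, b, c, d) v)"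
  shows "a + d = 0"
proof -
  have det': "a * d + b * c = 1" using det by (simp add: bit_fls_diff_eq_add)
  obtain p q where "p \<noteq> 0" and
    cases: "(v = (p, 0) \<and> mat2_apply (a, b, c, d) v = (q, 0))
      \<or> (v = (p, p) \<and> mat2_apply (a, b, c, d) v = (q, q))
      \<or> (v = (0, p) \<and> mat2_apply (a, b, c, d) v = (0, q))"
    using v w unfolding sigma_type_def by auto
  from cases \<open>p \<noteq> 0\<close> consider "b * c = 0" | "a * p + b * p = c * p + d * p"
    by auto
  then show ?thesis
  proof cases
    case 1
    then have "a * d = 1" using det' by auto
    then show ?thesis using pal bit_fls_palindromic_unit_sum by simp
  next
    case 2
    define L where "L = a + b"
    have "(a + b) * p = (c + d) * p" using 2 by (simp add: algebra_simps)
    then have L: "L = c + d" using \<open>p \<noteq> 0\<close> by (simp add: L_def)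
    have "b = L + a" by (simp add: L_def algebra_simps)
    moreover have "c = L + d" by (simp add: L algebra_simps)
    ultimately have "b * c = L * (L + a + d) + a * d" by (simp add: algebra_simps)
    then have "L * (L + a + d) = 1"
      using det' by (simp add: add.left_commute[of "a * d"])
    moreover have "fls_palindromic L" using pal by (simp add: L_def fls_palindromic_add)
    ultimately have "L + (L + a + d) = 0"
      using pal by (simp add: bit_fls_palindromic_unit_sum fls_palindromic_add)
    then show ?thesis by (simp add: add.assoc)
  qed
qed

lemma sigma_type_preserved_square_eq_one:
  fixes M :: "bit fls mat2"
  assumes "mat2_all fls_palindromic M" "mat2_det M = 1"
    and "sigma_type j v" "sigma_type j (mat2_apply M v)"
  shows "mat2_mult M M = mat2_one"
proof (cases M)
  case (fields a b c d)
  then have "a + d = 0" using assms sigma_type_preserved_traceless by blast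
  then have "mat2_mult M M = (- mat2_det M, 0, 0, - mat2_det M)"
    unfolding fields by (rule mat2_square_traceless)
  then show ?thesis by (simp only: assms(2)) (simp add: mat2_one_def)
qed

lemma is_lpoly_lp_zero [simp]: "is_lpoly lp_zero"
  by (simp add: is_lpoly_def lp_zero_def)

lemma is_lpoly_lp_one [simp]: "is_lpoly lp_one"
  by (simp add: is_lpoly_def lp_one_def)

lemma is_lpoly_lp_add [simp]: "is_lpoly p \<Longrightarrow> is_lpoly q \<Longrightarrow> is_lpoly (lp_add p q)"
  unfolding is_lpoly_def lp_add_def
  by (rule finite_subset[of _ "{n. p n \<noteq> 0} \<union> {n. q n \<noteq> 0}"]) auto

lemma is_lpoly_lp_mult [simp]:
  assumes "is_lpoly p" "is_lpoly q"
  shows "is_lpoly (lp_mult p q)"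
proof -
  let ?S = "{n. p n \<noteq> 0}" and ?T = "{n. q n \<noteq> 0}"
  have "{n. lp_mult p q n \<noteq> 0} \<subseteq> (\<lambda>(k, l). k + l) ` (?S \<times> ?T)"
  proof
    fix n assume "n \<in> {n. lp_mult p q n \<noteq> 0}"
    then have "(\<Sum>k \<in> ?S. p k * q (n - k)) \<noteq> 0" by (simp add: lp_mult_def)
    then obtain k where "k \<in> ?S" "p k * q (n - k) \<noteq> 0" by (meson sum.neutral)
    then have "(k, n - k) \<in> ?S \<times> ?T" by auto
    then show "n \<in> (\<lambda>(k, l). k + l) ` (?S \<times> ?T)" by force
  qed
  moreover have "finite ((\<lambda>(k, l). k + l) ` (?S \<times> ?T))"
    using assms by (simp add: is_lpoly_def)
  ultimately show ?thesis unfolding is_lpoly_def by (rule finite_subset)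
qed

definition fls_of_lpoly :: "lpoly \<Rightarrow> bit fls" where
  "fls_of_lpoly p = Abs_fls p"

lemma fls_nth_fls_of_lpoly [simp]:
  assumes "is_lpoly p"
  shows "fls_of_lpoly p $$ n = p n"
proof -
  have "finite ((\<lambda>n::nat. - int n) -` {n. p n \<noteq> 0})"
    using assms by (intro finite_vimageI) (auto simp: is_lpoly_def inj_on_def)
  then show ?thesis
    unfolding fls_of_lpoly_def by (simp add: nth_Abs_fls_finite_nonzero_neg_nth vimage_def)
qed

lemma fls_of_lpoly_inject:
  "is_lpoly p \<Longrightarrow> is_lpoly q \<Longrightarrow> fls_of_lpoly p = fls_of_lpoly q \<longleftrightarrow> p = q"
  by (metis fls_nth_fls_of_lpoly ext)

lemma fls_of_lpoly_lp_zero [simp]: "fls_of_lpoly lp_zero = 0"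
  by (rule fls_eqI) (simp only: fls_nth_fls_of_lpoly is_lpoly_lp_zero, simp add: lp_zero_def)

lemma fls_of_lpoly_lp_one [simp]: "fls_of_lpoly lp_one = 1"
  by (rule fls_eqI) (simp only: fls_nth_fls_of_lpoly is_lpoly_lp_one, simp add: lp_one_def)

lemma fls_of_lpoly_lp_add [simp]:
  "is_lpoly p \<Longrightarrow> is_lpoly q \<Longrightarrow> fls_of_lpoly (lp_add p q) = fls_of_lpoly p + fls_of_lpoly q"
  by (rule fls_eqI) (simp only: fls_nth_fls_of_lpoly is_lpoly_lp_add, simp add: lp_add_def)

text \<open>\<open>lp_mult\<close> sums over the support of \<open>p\<close>, \<open>fls_times_nth\<close> over the window between the two
  subdegrees; outside their common part the summands vanish.\<close>

lemma fls_of_lpoly_lp_mult [simp]: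
  assumes p: "is_lpoly p" and q: "is_lpoly q"
  shows "fls_of_lpoly (lp_mult p q) = fls_of_lpoly p * fls_of_lpoly q"
proof (rule fls_eqI)
  fix n
  define dp where "dp = fls_subdegree (fls_of_lpoly p)"
  define dq where "dq = fls_subdegree (fls_of_lpoly q)"
  let ?S = "{k. p k \<noteq> 0}"
  have low_p: "dp \<le> k" if "p k \<noteq> 0" for k
    unfolding dp_def using that p by (intro fls_subdegree_leI) simp
  have low_q: "dq \<le> k" if "q k \<noteq> 0" for k
    unfolding dq_def using that q by (intro fls_subdegree_leI) simp
  have "(fls_of_lpoly p * fls_of_lpoly q) $$ n = (\<Sum>k = dp..n - dq. p k * q (n - k))"
    unfolding dp_def dq_def fls_times_nth(2) using p q by simp
  also have "\<dots> = (\<Sum>k \<in> ?S \<inter> {dp..n - dq}. p k * q (n - k))"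
    by (rule sum.mono_neutral_right) auto
  also have "\<dots> = (\<Sum>k \<in> ?S. p k * q (n - k))"
  proof (rule sum.mono_neutral_left)
    show "finite ?S" using p by (simp add: is_lpoly_def)
    show "\<forall>k \<in> ?S - ?S \<inter> {dp..n - dq}. p k * q (n - k) = 0"
      using low_p low_q by force
  qed auto
  finally show "fls_of_lpoly (lp_mult p q) $$ n = (fls_of_lpoly p * fls_of_lpoly q) $$ n"
    using p q by (simp only: fls_nth_fls_of_lpoly is_lpoly_lp_mult) (simp add: lp_mult_def)
qed

lemma is_palindrome_lp_add:
  "is_palindrome p \<Longrightarrow> is_palindrome q \<Longrightarrow> is_palindrome (lp_add p q)"
  using is_lpoly_lp_add[of p q] by (simp add: is_palindrome_def lp_add_def)

lemma is_palindrome_lp_mult: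
  assumes p: "is_palindrome p" and q: "is_palindrome q"
  shows "is_palindrome (lp_mult p q)"
proof -
  have "lp_mult p q (- n) = lp_mult p q n" for n
  proof -
    have "(\<Sum>k \<in> {k. p k \<noteq> 0}. p k * q (- n - k)) = (\<Sum>k \<in> {k. p k \<noteq> 0}. p k * q (n - k))"
    proof (rule sum.reindex_bij_witness[where i = uminus and j = uminus])
      fix k
      have "q (n + k) = q (- n - k)"
        using q unfolding is_palindrome_def by (metis minus_add_distrib diff_conv_add_uminus)
      then show "p (- k) * q (n - - k) = p k * q (- n - k)"
        using p by (simp add: is_palindrome_def)
    qed (use p in \<open>auto simp: is_palindrome_def\<close>)
    then show ?thesis by (simp add: lp_mult_def)
  qed
  then show ?thesis using p q by (simp add: is_palindrome_def)
qed

lemma fls_palindromic_fls_of_lpoly: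
  "is_palindrome p \<Longrightarrow> fls_palindromic (fls_of_lpoly p)"
  by (simp add: fls_palindromic_def is_palindrome_def)

lemma is_csca_iff: "is_csca a \<longleftrightarrow> mat2_all is_palindrome a \<and> mat_det a = lp_one"
  by (cases a) (simp add: is_csca_def)

lemma mat2_all_is_lpoly_if_palindrome: "mat2_all is_palindrome A \<Longrightarrow> mat2_all is_lpoly A"
  by (cases A) (simp add: is_palindrome_def)

lemma mat2_all_is_lpoly_mat_mult:
  "mat2_all is_lpoly A \<Longrightarrow> mat2_all is_lpoly B \<Longrightarrow> mat2_all is_lpoly (mat_mult A B)"
  by (cases A; cases B) simp

lemma mat2_all_is_lpoly_mat_pow: "mat2_all is_lpoly A \<Longrightarrow> mat2_all is_lpoly (mat_pow A n)"
  by (induction n) (simp_all add: mat_id_def mat2_all_is_lpoly_mat_mult)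

lemma mat2_all_is_palindrome_mat_pow:
  assumes "mat2_all is_palindrome A"
  shows "mat2_all is_palindrome (mat_pow A n)"
proof (induction n)
  case 0
  show ?case
    using is_lpoly_lp_zero is_lpoly_lp_one
    by (simp add: mat_id_def is_palindrome_def lp_zero_def lp_one_def)
next
  case (Suc n)
  with assms show ?case
    by (cases A; cases "mat_pow A n") (simp add: is_palindrome_lp_add is_palindrome_lp_mult)
qed

lemma pred_prod_is_lpoly_mat_apply:
  "mat2_all is_lpoly A \<Longrightarrow> pred_prod is_lpoly is_lpoly v
    \<Longrightarrow> pred_prod is_lpoly is_lpoly (mat_apply A v)"
  by (cases A; cases v) simp

lemma is_lpoly_mat_det: "mat2_all is_lpoly A \<Longrightarrow> is_lpoly (mat_det A)"
  by (cases A) simp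

lemma mat2_map_fls_of_lpoly_mat_mult:
  "mat2_all is_lpoly A \<Longrightarrow> mat2_all is_lpoly B \<Longrightarrow>
    mat2_map fls_of_lpoly (mat_mult A B)
      = mat2_mult (mat2_map fls_of_lpoly A) (mat2_map fls_of_lpoly B)"
  by (cases A; cases B) simp

lemma mat2_map_fls_of_lpoly_mat_pow:
  "mat2_all is_lpoly A \<Longrightarrow>
    mat2_map fls_of_lpoly (mat_pow A n) = mat2_pow (mat2_map fls_of_lpoly A) n"
  by (induction n)
    (simp_all add: mat_id_def mat2_one_def mat2_map_fls_of_lpoly_mat_mult mat2_all_is_lpoly_mat_pow)

lemma map_prod_fls_of_lpoly_mat_apply:
  "mat2_all is_lpoly A \<Longrightarrow> pred_prod is_lpoly is_lpoly v \<Longrightarrow>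
    map_prod fls_of_lpoly fls_of_lpoly (mat_apply A v)
      = mat2_apply (mat2_map fls_of_lpoly A) (map_prod fls_of_lpoly fls_of_lpoly v)"
  by (cases A; cases v) simp

lemma fls_of_lpoly_mat_det:
  "mat2_all is_lpoly A \<Longrightarrow> fls_of_lpoly (mat_det A) = mat2_det (mat2_map fls_of_lpoly A)"
  by (cases A) (simp add: bit_fls_diff_eq_add)

lemma mat2_map_fls_of_lpoly_inject:
  "mat2_all is_lpoly A \<Longrightarrow> mat2_all is_lpoly B \<Longrightarrow>
    mat2_map fls_of_lpoly A = mat2_map fls_of_lpoly B \<longleftrightarrow> A = B"
  by (cases A; cases B) (simp add: fls_of_lpoly_inject)

lemma map_prod_fls_of_lpoly_inject:
  "pred_prod is_lpoly is_lpoly v \<Longrightarrow> pred_prod is_lpoly is_lpoly w \<Longrightarrow>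
    map_prod fls_of_lpoly fls_of_lpoly v = map_prod fls_of_lpoly fls_of_lpoly w \<longleftrightarrow> v = w"
  by (cases v; cases w) (simp add: fls_of_lpoly_inject)

lemma mat_pow_add:
  assumes "mat2_all is_lpoly A"
  shows "mat_pow A (m + n) = mat_mult (mat_pow A m) (mat_pow A n)"
  using assms
  by (simp add: mat2_map_fls_of_lpoly_inject[symmetric] mat2_all_is_lpoly_mat_pow
      mat2_all_is_lpoly_mat_mult mat2_map_fls_of_lpoly_mat_mult mat2_map_fls_of_lpoly_mat_pow
      mat2_pow_add)

lemma mat_apply_mat_mult:
  assumes "mat2_all is_lpoly A" "mat2_all is_lpoly B" "pred_prod is_lpoly is_lpoly v"
  shows "mat_apply (mat_mult A B) v = mat_apply A (mat_apply B v)"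
  using assms
  by (simp add: map_prod_fls_of_lpoly_inject[symmetric] pred_prod_is_lpoly_mat_apply
      mat2_all_is_lpoly_mat_mult map_prod_fls_of_lpoly_mat_apply mat2_map_fls_of_lpoly_mat_mult
      mat2_apply_mult)

lemma is_csca_mat_pow:
  assumes "is_csca A"
  shows "is_csca (mat_pow A n)"
proof -
  have pal: "mat2_all is_palindrome A" and det: "mat_det A = lp_one"
    using assms by (simp_all add: is_csca_iff)
  from pal have lp: "mat2_all is_lpoly A" by (rule mat2_all_is_lpoly_if_palindrome)
  have "fls_of_lpoly (mat_det (mat_pow A n)) = mat2_det (mat2_map fls_of_lpoly A) ^ n"
    using lp by (simp add: fls_of_lpoly_mat_det mat2_all_is_lpoly_mat_pow
        mat2_map_fls_of_lpoly_mat_pow mat2_det_pow)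
  also have "\<dots> = fls_of_lpoly lp_one"
    using lp det by (simp flip: fls_of_lpoly_mat_det)
  finally have "mat_det (mat_pow A n) = lp_one"
    using lp by (simp only: fls_of_lpoly_inject is_lpoly_mat_det mat2_all_is_lpoly_mat_pow
        is_lpoly_lp_one)
  with pal show ?thesis by (simp add: is_csca_iff mat2_all_is_palindrome_mat_pow)
qed

lemma is_type_transfer:
  assumes "is_type j v"
  shows "pred_prod is_lpoly is_lpoly v" "sigma_type j (map_prod fls_of_lpoly fls_of_lpoly v)"
proof -
  obtain p where p: "is_lpoly p" "p \<noteq> lp_zero"
    "(j = 1 \<and> v = (p, lp_zero)) \<or> (j = 2 \<and> v = (p, p)) \<or> (j = 3 \<and> v = (lp_zero, p))"
    using assms unfolding is_type_def by blast
  then have "fls_of_lpoly p \<noteq> 0"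
    by (metis fls_of_lpoly_inject fls_of_lpoly_lp_zero is_lpoly_lp_zero)
  with p show "pred_prod is_lpoly is_lpoly v" "sigma_type j (map_prod fls_of_lpoly fls_of_lpoly v)"
    unfolding sigma_type_def by auto
qed

lemma csca_square_eq_id_if_type_preserved:
  assumes "is_csca A" "is_type j v" "is_type j (mat_apply A v)"
  shows "mat_mult A A = mat_id"
proof -
  have pal: "mat2_all is_palindrome A" and det: "mat_det A = lp_one"
    using assms(1) by (simp_all add: is_csca_iff)
  from pal have lp: "mat2_all is_lpoly A" by (rule mat2_all_is_lpoly_if_palindrome)
  have "mat2_all fls_palindromic (mat2_map fls_of_lpoly A)"
    using pal by (cases A) (simp add: fls_palindromic_fls_of_lpoly)
  moreover have "mat2_det (mat2_map fls_of_lpoly A) = 1"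
    using lp det by (simp flip: fls_of_lpoly_mat_det)
  ultimately have "mat2_mult (mat2_map fls_of_lpoly A) (mat2_map fls_of_lpoly A) = mat2_one"
    using is_type_transfer[OF assms(2)] is_type_transfer[OF assms(3)] lp
    by (intro sigma_type_preserved_square_eq_one) (simp_all add: map_prod_fls_of_lpoly_mat_apply)
  then show ?thesis
    using lp by (simp add: mat2_map_fls_of_lpoly_inject[symmetric] mat2_all_is_lpoly_mat_mult
        mat2_map_fls_of_lpoly_mat_mult mat_id_def mat2_one_def)
qed

theorem lemmaA1:
  fixes a :: lmat and j :: nat and \<xi> :: lvec
  assumes "is_csca a" and "\<not> is_periodic a"
    and "j \<in> {1, 2, 3}"
    and "is_lpoly (fst \<xi>)" and "is_lpoly (snd \<xi>)" and "\<xi> \<noteq> (lp_zero, lp_zero)"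
  shows "\<forall>t1 t2. is_type j (mat_apply (mat_pow a t1) \<xi>) \<and> is_type j (mat_apply (mat_pow a t2) \<xi>)
           \<longrightarrow> t1 = t2"
proof -
  have lpa: "mat2_all is_lpoly a"
    using assms(1) by (simp add: is_csca_iff mat2_all_is_lpoly_if_palindrome)
  then have lp: "mat2_all is_lpoly (mat_pow a n)" for n by (rule mat2_all_is_lpoly_mat_pow)
  have \<xi>: "pred_prod is_lpoly is_lpoly \<xi>" using assms(4,5) by (cases \<xi>) simp
  have "\<not> (is_type j (mat_apply (mat_pow a t) \<xi>) \<and> is_type j (mat_apply (mat_pow a t') \<xi>))"
    if "t < t'" for t t'
  proof
    assume types: "is_type j (mat_apply (mat_pow a t) \<xi>) \<and> is_type j (mat_apply (mat_pow a t') \<xi>)"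
    define s where "s = t' - t"
    have "s > 0" "t' = s + t" using \<open>t < t'\<close> by (simp_all add: s_def)
    then have "mat_apply (mat_pow a t') \<xi> = mat_apply (mat_mult (mat_pow a s) (mat_pow a t)) \<xi>"
      using lpa by (simp add: mat_pow_add)
    also have "\<dots> = mat_apply (mat_pow a s) (mat_apply (mat_pow a t) \<xi>)"
      by (rule mat_apply_mat_mult[OF lp lp \<xi>])
    finally have "mat_mult (mat_pow a s) (mat_pow a s) = mat_id"
      using types is_csca_mat_pow[OF assms(1)] csca_square_eq_id_if_type_preserved by metis
    then have "mat_pow a (s + s) = mat_id" using lpa by (simp add: mat_pow_add)
    moreover have "s + s > 0" using \<open>s > 0\<close> by simp
    ultimately show False using assms(2) unfolding is_periodic_def by blast
  qed
  then show ?thesis by (metis linorder_neqE_nat)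
qed

end
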